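(* Let $q>2$, $n>1$, and let $f:H(n,q)\to\mathbb{R}$ be an additive function with $|S(f)|\le 2(q-1)q^{n-2}$. Then one of the following holds: (1) $f\equiv 0$; (2) there exist $i\in\{1,\dots,n\}$, $k\in\{0,\dots,q-1\}$ and a constant $c\neq 0$ such that $f(x)=c$ for $x\in T_k(i,n)$ and $f(x)=0$ otherwise; (3) there exist $i\ne j$ in $\{1,\dots,n\}$, $k,m\in\{0,\dots,q-1\}$ and a constant $c\ne 0$ such that $f(x)=c$ for $x\in T_k(i,n)\setminus T_m(j,n)$, $f(x)=-c$ for $x\in T_m(j,n)\setminus T_k(i,n)$, and $f(x)=0$ otherwise.
   Context: The Hamming graph $H(N,q)$ has vertex set $\{0,1,\dots,q-1\}^N$, two words being adjacent iff they differ in exactly one coordinate. For $f:H(N,q)\to\mathbb{R}$, its support is $S(f)=\{x: f(x)\ne 0\}$. $T_k(i,N)$ denotes the set of vertices of $H(N,q)$ whose $i$-th coordinate equals $k$. For $f:H(N,q)\to\mathbb{R}$ ($N\ge1$), $i\in\{1,\dots,N\}$ and $k,m\in\{0,\dots,q-1\}$, define $g_{i,k,m}:H(N-1,q)\to\mathbb{R}$ by $g_{i,k,m}(t)=f(x)-f(y)$, where $x$ and $y$ are obtained from $t$ by inserting $k$, resp. $m$, as the $i$-th coordinate. The function $f$ is called additive if all functions $g_{i,k,m}$ are constant. *)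

theory Defs
  imports "HOL-Analysis.Analysis"
begin

text \<open>Vertices of the Hamming graph H(N,q): words of length N over {0..q-1}, represented
  as functions nat => nat with coordinates indexed 0..N-1 (coordinate i here is the paper's
  (i+1)-th coordinate), and value 0 outside {0..<N}.\<close>

definition hamming :: "nat \<Rightarrow> nat \<Rightarrow> (nat \<Rightarrow> nat) set" where
  "hamming N q = {x. (\<forall>i<N. x i < q) \<and> (\<forall>i\<ge>N. x i = 0)}"

definition supp :: "nat \<Rightarrow> nat \<Rightarrow> ((nat \<Rightarrow> nat) \<Rightarrow> real) \<Rightarrow> (nat \<Rightarrow> nat) set" where
  "supp N q f = {x \<in> hamming N q. f x \<noteq> 0}"

definition T :: "nat \<Rightarrow> nat \<Rightarrow> nat \<Rightarrow> nat \<Rightarrow> (nat \<Rightarrow> nat) set" where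
  "T q k i N = {x \<in> hamming N q. x i = k}"

definition ins_coord :: "nat \<Rightarrow> nat \<Rightarrow> (nat \<Rightarrow> nat) \<Rightarrow> (nat \<Rightarrow> nat)" where
  "ins_coord i k t = (\<lambda>j. if j < i then t j else if j = i then k else t (j - 1))"

definition g_fun :: "((nat \<Rightarrow> nat) \<Rightarrow> real) \<Rightarrow> nat \<Rightarrow> nat \<Rightarrow> nat \<Rightarrow> (nat \<Rightarrow> nat) \<Rightarrow> real" where
  "g_fun f i k m t = f (ins_coord i k t) - f (ins_coord i m t)"

definition additive :: "nat \<Rightarrow> nat \<Rightarrow> ((nat \<Rightarrow> nat) \<Rightarrow> real) \<Rightarrow> bool" where
  "additive N q f \<longleftrightarrow> (\<forall>i<N. \<forall>k<q. \<forall>m<q. \<exists>c. \<forall>t\<in>hamming (N - 1) q. g_fun f i k m t = c)"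

end

theory Submission
  imports Defs
begin

text \<open>
  An additive function is \<open>f 0\<close> plus a sum of coordinate functions \<open>a l\<close> with \<open>a l 0 = 0\<close>,
  and the support bound leaves at least \<open>((q - 1)^2 + 1) q^(n - 2)\<close> zeros. Counting a level set
  of such a sum by fibring over one coordinate with nonconstant \<open>a i\<close>, and comparing with the
  most frequent value of \<open>a i\<close>, shows that a level set is strictly smaller than this as soon
  as three coordinate functions are nonconstant. Hence \<open>f\<close> depends on at most two coordinates,
  and a pigeonhole count on the \<open>q\<close> or \<open>q \<times> q\<close> table of its values forces every nonconstant
  coordinate function to be constant except at a single point, which gives the three shapes.
\<close>

definition words :: "nat \<Rightarrow> nat set \<Rightarrow> (nat \<Rightarrow> nat) set" where
  "words q K = {x. (\<forall>l\<in>K. x l < q) \<and> (\<forall>l. l \<notin> K \<longrightarrow> x l = 0)}"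

lemma hamming_eq_words: "hamming N q = words q {..<N}"
  unfolding hamming_def words_def by auto

lemma words_outsideD: "x \<in> words q K \<Longrightarrow> l \<notin> K \<Longrightarrow> x l = 0"
  unfolding words_def by blast

lemma words_empty: "words q {} = {\<lambda>_. 0}"
  unfolding words_def by auto

lemma words_insert:
  assumes "i \<notin> K"
  shows "words q (insert i K) = (\<lambda>(y, k). y(i := k)) ` (words q K \<times> {..<q})"
proof (intro equalityI subsetI)
  fix x assume x: "x \<in> words q (insert i K)"
  then have "(x(i := 0), x i) \<in> words q K \<times> {..<q}"
    using assms unfolding words_def by auto
  then show "x \<in> (\<lambda>(y, k). y(i := k)) ` (words q K \<times> {..<q})"
    by (rule rev_image_eqI) simp
qed (use assms in \<open>auto simp: words_def\<close>)

lemma inj_on_upd_words: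
  assumes "i \<notin> K"
  shows "inj_on (\<lambda>(y, k). y(i := k)) (words q K \<times> {..<q})"
proof (rule inj_onI, clarsimp)
  fix y z k m
  assume "y \<in> words q K" "z \<in> words q K" and eq: "y(i := k) = z(i := m)"
  then have "y i = 0" "z i = 0" using assms by (auto intro: words_outsideD)
  with eq show "y = z \<and> k = m"
    by (metis fun_upd_idem fun_upd_same fun_upd_upd)
qed

lemma sum_words_insert:
  assumes "i \<notin> K"
  shows "(\<Sum>x\<in>words q (insert i K). F x) = (\<Sum>y\<in>words q K. \<Sum>k<q. F (y(i := k)))"
proof -
  have "(\<Sum>x\<in>words q (insert i K). F x) = (\<Sum>(y, k)\<in>words q K \<times> {..<q}. F (y(i := k)))"
    unfolding words_insert[OF assms] by (subst sum.reindex[OF inj_on_upd_words[OF assms]]) (simp add: case_prod_beta)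
  then show ?thesis
    by (simp add: sum.cartesian_product)
qed

lemma finite_words: "finite K \<Longrightarrow> finite (words q K)"
  by (induction K rule: finite_induct) (simp_all add: words_empty words_insert)

lemma card_words: "finite K \<Longrightarrow> card (words q K) = q ^ card K"
proof (induction K rule: finite_induct)
  case (insert i K)
  then show ?case
    using sum_words_insert[OF insert(2), where q=q and F="\<lambda>_. 1::nat"] by simp
qed (simp add: words_empty)

lemma card_words_filter_insert:
  assumes "finite K" "i \<notin> K"
  shows "card {x \<in> words q (insert i K). P x} = (\<Sum>y\<in>words q K. card {k \<in> {..<q}. P (y(i := k))})"
  using sum_words_insert[OF assms(2), where q=q and F="\<lambda>x. if P x then 1 else 0 :: nat"]
  by (simp add: sum.If_cases finite_words assms Int_def conj_commute)

lemma card_words_filter_coord: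
  assumes "finite K" "i \<in> K"
  shows "card {x \<in> words q K. P (x i)} = q ^ (card K - 1) * card {k \<in> {..<q}. P k}"
proof -
  have K: "K = insert i (K - {i})" using assms(2) by blast
  have "card {x \<in> words q K. P (x i)} = (\<Sum>y\<in>words q (K - {i}). card {k \<in> {..<q}. P k})"
    by (subst K, subst card_words_filter_insert) (use assms in auto)
  then show ?thesis
    using assms by (simp add: card_words)
qed

lemma card_words_filter_two_coords:
  assumes "finite K" "i \<in> K" "j \<in> K" "i \<noteq> j"
  shows "card {x \<in> words q K. P (x i) (x j)}
       = q ^ (card K - 2) * (\<Sum>m<q. card {k \<in> {..<q}. P k m})"
proof -
  have K: "K = insert i (insert j (K - {i, j}))" using assms by blast
  have "card {x \<in> words q K. P (x i) (x j)}
      = (\<Sum>y\<in>words q (insert j (K - {i, j})). card {k \<in> {..<q}. P k (y j)})"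
    by (subst K, subst card_words_filter_insert) (use assms in auto)
  also have "\<dots> = (\<Sum>z\<in>words q (K - {i, j}). \<Sum>m<q. card {k \<in> {..<q}. P k m})"
    by (subst sum_words_insert) auto
  finally show ?thesis
    using assms by (simp add: card_words numeral_2_eq_2)
qed

lemma card_filter_eq_sum_of_bool: "finite A \<Longrightarrow> card {x \<in> A. P x} = (\<Sum>x\<in>A. of_bool (P x))"
  by (simp add: Int_def conj_commute)

lemma sum_card_filter_swap:
  "(\<Sum>m<q. card {k \<in> {..<q}. P k m}) = (\<Sum>k<(q::nat). card {m \<in> {..<q}. P k m})"
proof -
  have "(\<Sum>m<q. card {k \<in> {..<q}. P k m}) = (\<Sum>m<q. \<Sum>k<q. of_bool (P k m))"
    by (intro sum.cong refl card_filter_eq_sum_of_bool) simp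
  also have "\<dots> = (\<Sum>k<q. \<Sum>m<q. of_bool (P k m))" by (rule sum.swap)
  also have "\<dots> = (\<Sum>k<q. card {m \<in> {..<q}. P k m})"
    by (intro sum.cong refl card_filter_eq_sum_of_bool[symmetric]) simp
  finally show ?thesis .
qed

lemma sum_if_single:
  fixes F :: "'a \<Rightarrow> nat"
  assumes "k0 < q"
  shows "(\<Sum>k<q. F (if k = k0 then X else Y)) = F X + (q - 1) * F Y"
proof -
  have "(\<Sum>k<q. F (if k = k0 then X else Y)) = F X + (\<Sum>k\<in>{..<q} - {k0}. F (if k = k0 then X else Y))"
    using assms by (simp add: sum.remove[of _ k0])
  also have "(\<Sum>k\<in>{..<q} - {k0}. F (if k = k0 then X else Y)) = (\<Sum>k\<in>{..<q} - {k0}. F Y)"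
    by (rule sum.cong) auto
  finally show ?thesis using assms by simp
qed

definition nonconstant :: "nat \<Rightarrow> (nat \<Rightarrow> 'a) \<Rightarrow> bool" where
  "nonconstant q \<phi> \<longleftrightarrow> (\<exists>k<q. \<phi> k \<noteq> \<phi> 0)"

lemma nonconstant_two_le:
  assumes "nonconstant q \<phi>"
  shows "2 \<le> q"
proof -
  obtain k where "k < q" "\<phi> k \<noteq> \<phi> 0" using assms unfolding nonconstant_def by blast
  then have "k \<noteq> 0" by metis
  with \<open>k < q\<close> show ?thesis by linarith
qed

lemma nonconstant_ex_ne:
  assumes "nonconstant q \<phi>"
  obtains k where "k < q" "\<phi> k \<noteq> u"
proof -
  obtain k0 where "k0 < q" "\<phi> k0 \<noteq> \<phi> 0" using assms unfolding nonconstant_def by blast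
  then show ?thesis using that by (cases "\<phi> 0 = u") auto
qed

lemma card_fiber_le_of_nonconstant:
  assumes "nonconstant q \<phi>"
  shows "card {k \<in> {..<q}. \<phi> k = u} \<le> q - 1"
proof -
  obtain k where "k < q" "\<phi> k \<noteq> u" using assms by (rule nonconstant_ex_ne)
  then have "{k \<in> {..<q}. \<phi> k = u} \<subseteq> {..<q} - {k}" by auto
  then show ?thesis
    using card_mono[of "{..<q} - {k}"] \<open>k < q\<close> by fastforce
qed

lemma card_two_fibers_le:
  assumes "u \<noteq> v"
  shows "card {k \<in> {..<q}. \<phi> k = u} + card {k \<in> {..<q}. \<phi> k = v} \<le> q"
proof -
  have "card {k \<in> {..<q}. \<phi> k = u} + card {k \<in> {..<q}. \<phi> k = v}
      = card ({k \<in> {..<q}. \<phi> k = u} \<union> {k \<in> {..<q}. \<phi> k = v})"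
    using assms by (intro card_Un_disjoint[symmetric]) auto
  also have "\<dots> \<le> q" by (rule card_mono[of "{..<q}", simplified]) auto
  finally show ?thesis .
qed

lemma exists_largest_fiber:
  fixes \<phi> :: "nat \<Rightarrow> 'a"
  assumes "q > 0"
  shows "\<exists>u. \<forall>v. card {k \<in> {..<q}. \<phi> k = v} \<le> card {k \<in> {..<q}. \<phi> k = u}"
proof -
  define N where "N v = card {k \<in> {..<q}. \<phi> k = v}" for v
  obtain k0 where "k0 < q" and max: "\<And>k. k < q \<Longrightarrow> N (\<phi> k) \<le> N (\<phi> k0)"
    using ex_has_greatest_nat[of "\<lambda>k. k < q" 0 "\<lambda>k. N (\<phi> k)" "Suc q"] assms
    by (auto simp: N_def less_Suc_eq_le intro: card_mono[of "{..<q}", simplified])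
  have "N v \<le> N (\<phi> k0)" for v
  proof (cases "\<exists>k<q. \<phi> k = v")
    case True
    then show ?thesis using max by blast
  next
    case False
    then have "{k \<in> {..<q}. \<phi> k = v} = {}" by auto
    then show ?thesis unfolding N_def by (metis card.empty zero_le)
  qed
  then show ?thesis unfolding N_def by blast
qed

lemma single_exception_of_card_fiber:
  assumes "(q - 1) * (q - 1) + 1 \<le> q * card {k \<in> {..<q}. \<phi> k = u}" "k1 < q" "\<phi> k1 \<noteq> u"
  shows "\<exists>k0<q. \<forall>k<q. \<phi> k \<noteq> u \<longleftrightarrow> k = k0"
proof -
  define F where "F = {k \<in> {..<q}. \<phi> k = u}"
  define E where "E = {k \<in> {..<q}. \<phi> k \<noteq> u}"
  have "q - 1 \<le> card F"
  proof (rule ccontr)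
    assume "\<not> q - 1 \<le> card F"
    then have "q * card F \<le> q * (q - 2)" by (intro mult_le_mono2) linarith
    moreover have "q * (q - 2) < (q - 1) * (q - 1) + 1"
    proof (cases "q < 2")
      case False
      then obtain r where "q = r + 2" by (metis add.commute le_Suc_ex not_less)
      then show ?thesis by (simp add: algebra_simps)
    qed auto
    ultimately show False using assms(1) unfolding F_def by linarith
  qed
  moreover have "card F + card E = q"
  proof -
    have "card F + card E = card (F \<union> E)"
      by (rule card_Un_disjoint[symmetric]) (auto simp: F_def E_def)
    also have "F \<union> E = {..<q}" by (auto simp: F_def E_def)
    finally show ?thesis by simp
  qed
  moreover have "card E \<noteq> 0" using assms(2,3) unfolding E_def by auto
  ultimately have "card E = 1" by linarith
  then obtain k0 where "E = {k0}" by (rule card_1_singletonE)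
  then show ?thesis unfolding E_def by (auto simp: set_eq_iff)
qed

lemma single_exception_of_sum_card_fibers:
  assumes "(q - 1) * (q - 1) + 1 \<le> (\<Sum>m<q. card {k \<in> {..<q}. \<phi> k = v m})" "nonconstant q \<phi>"
  shows "\<exists>u. \<exists>k0<q. \<forall>k<q. \<phi> k \<noteq> u \<longleftrightarrow> k = k0"
proof -
  obtain u where u: "\<And>v. card {k \<in> {..<q}. \<phi> k = v} \<le> card {k \<in> {..<q}. \<phi> k = u}"
    using exists_largest_fiber[of q \<phi>] nonconstant_two_le[OF assms(2)] by auto
  have "(\<Sum>m<q. card {k \<in> {..<q}. \<phi> k = v m}) \<le> q * card {k \<in> {..<q}. \<phi> k = u}"
    using sum_bounded_above[of "{..<q}" "\<lambda>m. card {k \<in> {..<q}. \<phi> k = v m}"] u by simp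
  moreover obtain k1 where "k1 < q" "\<phi> k1 \<noteq> u" using assms(2) by (rule nonconstant_ex_ne)
  ultimately have "(q - 1) * (q - 1) + 1 \<le> q * card {k \<in> {..<q}. \<phi> k = u}"
    using assms(1) by linarith
  from single_exception_of_card_fiber[OF this \<open>k1 < q\<close> \<open>\<phi> k1 \<noteq> u\<close>] show ?thesis by blast
qed

definition level_set :: "nat \<Rightarrow> nat set \<Rightarrow> (nat \<Rightarrow> nat \<Rightarrow> real) \<Rightarrow> real \<Rightarrow> (nat \<Rightarrow> nat) set" where
  "level_set q K a w = {x \<in> words q K. (\<Sum>l\<in>K. a l (x l)) = w}"

lemma card_level_set_le: "finite K \<Longrightarrow> card (level_set q K a w) \<le> q ^ card K"
  unfolding level_set_def
  by (metis (no_types, lifting) card_mono card_words finite_words mem_Collect_eq subsetI)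

lemma card_level_set_insert:
  assumes "finite K" "i \<notin> K"
  shows "card (level_set q (insert i K) a w)
       = (\<Sum>y\<in>words q K. card {k \<in> {..<q}. a i k = w - (\<Sum>l\<in>K. a l (y l))})"
  unfolding level_set_def
proof (subst card_words_filter_insert[OF assms], intro sum.cong refl arg_cong[where f=card])
  fix y assume "y \<in> words q K"
  have "(\<Sum>l\<in>insert i K. a l ((y(i := k)) l)) = a i k + (\<Sum>l\<in>K. a l (y l))" for k
  proof -
    have "(\<Sum>l\<in>K. a l ((y(i := k)) l)) = (\<Sum>l\<in>K. a l (y l))"
      using assms(2) by (intro sum.cong) auto
    then show ?thesis using assms by simp
  qed
  then show "{k \<in> {..<q}. (\<Sum>l\<in>insert i K. a l ((y(i := k)) l)) = w}
           = {k \<in> {..<q}. a i k = w - (\<Sum>l\<in>K. a l (y l))}"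
    by (auto simp: algebra_simps)
qed

lemma mode_bound_arith:
  fixes S s \<sigma> Y M q :: int
  assumes "0 \<le> M" "M \<le> q - 1" "s \<le> \<sigma>" "0 \<le> Y" "Y \<le> 2 * \<sigma>"
    and "S \<le> s * M + (Y - s) * (q - M)" "S \<le> Y * M"
  shows "2 * S \<le> Y * q \<or> S \<le> \<sigma> * (q - 2) + Y"
proof (cases "2 * M \<le> q")
  case True
  then have "Y * (2 * M) \<le> Y * q" using assms(4) by (rule mult_left_mono)
  then show ?thesis using assms(7) by linarith
next
  case False
  have "s * (2 * M - q) \<le> \<sigma> * (2 * M - q)"
    using False assms(3) by (intro mult_right_mono) auto
  moreover have "(q - 1 - M) * (Y - 2 * \<sigma>) \<le> 0"
    using assms(2,5) by (intro mult_nonneg_nonpos) auto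
  ultimately have "s * M + (Y - s) * (q - M) \<le> \<sigma> * (q - 2) + Y"
    by (simp add: algebra_simps)
  then show ?thesis using assms(6) by linarith
qed

lemma card_level_set_insert_mode_bound:
  assumes "finite K" "i \<notin> K" "nonconstant q (a i)"
  obtains u M where "M \<le> q - 1"
    "card (level_set q (insert i K) a w)
       \<le> card (level_set q K a (w - u)) * M + (q ^ card K - card (level_set q K a (w - u))) * (q - M)"
    "card (level_set q (insert i K) a w) \<le> q ^ card K * M"
proof -
  txt \<open>With \<open>u\<close> the most frequent value of \<open>a i\<close>, taken \<open>M\<close> times, a word of the smaller box
    extends to at most \<open>M\<close> words of the level, and to at most \<open>q - M\<close> unless it lies in the
    level \<open>w - u\<close> of the smaller box.\<close>
  obtain u where u: "\<And>v. card {k \<in> {..<q}. a i k = v} \<le> card {k \<in> {..<q}. a i k = u}"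
    using exists_largest_fiber[of q "a i"] nonconstant_two_le[OF assms(3)] by auto
  define M where "M = card {k \<in> {..<q}. a i k = u}"
  define h where "h y = card {k \<in> {..<q}. a i k = w - (\<Sum>l\<in>K. a l (y l))}" for y
  define Y where "Y = words q K"
  define L where "L = level_set q K a (w - u)"
  have S: "card (level_set q (insert i K) a w) = sum h Y"
    unfolding h_def Y_def by (rule card_level_set_insert[OF assms(1,2)])
  have finY: "finite Y" and cardY: "card Y = q ^ card K"
    unfolding Y_def using assms(1) by (simp_all add: finite_words card_words)
  have LY: "L \<subseteq> Y" unfolding L_def Y_def level_set_def by auto
  have h_le: "h y \<le> M" for y unfolding h_def M_def by (rule u)
  have h_off: "h y \<le> q - M" if "y \<in> Y - L" for y
  proof -
    have "w - (\<Sum>l\<in>K. a l (y l)) \<noteq> u" using that unfolding L_def Y_def level_set_def by auto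
    from card_two_fibers_le[OF this, of q "a i"] show ?thesis unfolding h_def M_def by simp
  qed
  have "sum h Y = sum h L + sum h (Y - L)"
    using sum.subset_diff[OF LY finY, of h] by (simp add: add.commute)
  moreover have "sum h L \<le> card L * M" "sum h (Y - L) \<le> card (Y - L) * (q - M)"
    using sum_bounded_above[of L h M] sum_bounded_above[of "Y - L" h "q - M"] h_le h_off by auto
  moreover have "card (Y - L) = card Y - card L" using LY finY by (simp add: card_Diff_subset finite_subset)
  ultimately have "sum h Y \<le> card L * M + (card Y - card L) * (q - M)" by (metis add_mono)
  moreover have "sum h Y \<le> card Y * M"
    using sum_bounded_above[of Y h M] h_le by simp
  moreover have "M \<le> q - 1" unfolding M_def by (rule card_fiber_le_of_nonconstant[OF assms(3)])
  ultimately show ?thesis using that S cardY unfolding L_def by simp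
qed

lemma card_level_set_insert_le:
  assumes "finite K" "i \<notin> K" "nonconstant q (a i)"
    and small: "\<And>v. card (level_set q K a v) \<le> \<sigma>" and "q ^ card K \<le> 2 * \<sigma>"
  shows "2 * card (level_set q (insert i K) a w) \<le> q ^ Suc (card K)
       \<or> card (level_set q (insert i K) a w) \<le> \<sigma> * (q - 2) + q ^ card K"
proof -
  define S where "S = card (level_set q (insert i K) a w)"
  define Y where "Y = q ^ card K"
  have q2: "2 \<le> q" using assms(3) by (rule nonconstant_two_le)
  obtain u M where M: "M \<le> q - 1"
    and S1: "S \<le> card (level_set q K a (w - u)) * M + (Y - card (level_set q K a (w - u))) * (q - M)"
    and S2: "S \<le> Y * M"
    using card_level_set_insert_mode_bound[where a=a, OF assms(1-3)] unfolding S_def Y_def by blast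
  define s where "s = card (level_set q K a (w - u))"
  have "s \<le> Y" unfolding s_def Y_def by (rule card_level_set_le[OF assms(1)])
  then have "int ((Y - s) * (q - M)) = (int Y - int s) * (int q - int M)"
    using M q2 by (simp add: of_nat_diff)
  then have "int S \<le> int s * int M + (int Y - int s) * (int q - int M)"
    using S1 unfolding s_def[symmetric] by (metis of_nat_add of_nat_le_iff of_nat_mult)
  moreover have "int S \<le> int Y * int M" using S2 by (simp flip: of_nat_mult)
  moreover have "int s \<le> int \<sigma>" using small[of "w - u"] unfolding s_def by simp
  moreover have "int Y \<le> 2 * int \<sigma>" using assms(5) unfolding Y_def by linarith
  ultimately have "2 * int S \<le> int Y * int q \<or> int S \<le> int \<sigma> * (int q - 2) + int Y"
    using M q2 by (intro mode_bound_arith) auto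
  moreover have "int (\<sigma> * (q - 2) + Y) = int \<sigma> * (int q - 2) + int Y"
    using q2 by (simp add: of_nat_diff)
  moreover have "int (q ^ Suc (card K)) = int Y * int q"
    unfolding Y_def by simp
  ultimately show ?thesis
    unfolding S_def[symmetric] Y_def[symmetric] by linarith
qed

lemma card_level_set_one_active:
  assumes "finite K" "i \<notin> K" "nonconstant q (a i)"
  shows "card (level_set q (insert i K) a w) \<le> (q - 1) * q ^ card K"
proof -
  define Q where "Q = q ^ card K"
  define S where "S = card (level_set q (insert i K) a w)"
  obtain p where q: "q = p + 2" using nonconstant_two_le[OF assms(3)] by (metis add.commute le_Suc_ex)
  have "2 * S \<le> q * Q \<or> S \<le> Q * (q - 2) + Q"
    using card_level_set_insert_le[where a=a and \<sigma>=Q, OF assms] card_level_set_le[OF assms(1)]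
    by (simp add: S_def Q_def)
  then have "S \<le> (p + 1) * Q"
    unfolding q by (auto simp: algebra_simps)
  then show ?thesis
    unfolding S_def Q_def q by simp
qed

lemma card_level_set_two_active:
  assumes "finite K" "i \<notin> K" "j \<notin> K" "i \<noteq> j" "nonconstant q (a i)" "nonconstant q (a j)"
  shows "card (level_set q (insert i (insert j K)) a w) \<le> ((q - 1) * (q - 1) + 1) * q ^ card K"
proof -
  define Q where "Q = q ^ card K"
  define S where "S = card (level_set q (insert i (insert j K)) a w)"
  obtain p where q: "q = p + 2" using nonconstant_two_le[OF assms(5)] by (metis add.commute le_Suc_ex)
  have pw: "q ^ card (insert j K) = q * Q" "q ^ Suc (card (insert j K)) = q * q * Q"
    using assms(1,3) unfolding Q_def by simp_all
  have "2 * S \<le> q ^ Suc (card (insert j K)) \<or> S \<le> (q - 1) * Q * (q - 2) + q ^ card (insert j K)"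
    unfolding S_def
  proof (rule card_level_set_insert_le[where a=a])
    show "card (level_set q (insert j K) a v) \<le> (q - 1) * Q" for v
      unfolding Q_def by (rule card_level_set_one_active[where a=a, OF assms(1,3,6)])
    show "q ^ card (insert j K) \<le> 2 * ((q - 1) * Q)"
      by (subst pw(1)) (simp add: q)
  qed (use assms in auto)
  then have "S \<le> ((p + 1) * (p + 1) + 1) * Q"
  proof
    assume "2 * S \<le> q ^ Suc (card (insert j K))"
    moreover have "q * q * Q \<le> 2 * (((p + 1) * (p + 1) + 1) * Q)"
      unfolding q by (simp add: algebra_simps)
    ultimately show ?thesis unfolding pw by linarith
  next
    assume "S \<le> (q - 1) * Q * (q - 2) + q ^ card (insert j K)"
    then show ?thesis by (subst (asm) pw(1)) (simp add: q algebra_simps)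
  qed
  then show ?thesis
    unfolding S_def Q_def q by simp
qed

lemma card_level_set_three_active:
  assumes "finite K" "i \<notin> K" "j \<notin> K" "l \<notin> K" "i \<noteq> j" "i \<noteq> l" "j \<noteq> l" "3 \<le> q"
    and "nonconstant q (a i)" "nonconstant q (a j)" "nonconstant q (a l)"
  shows "card (level_set q (insert i (insert j (insert l K))) a w)
       < ((q - 1) * (q - 1) + 1) * q ^ Suc (card K)"
proof -
  define c where "c = (q - 1) * (q - 1) + 1"
  define Q where "Q = q ^ card K"
  define S where "S = card (level_set q (insert i (insert j (insert l K))) a w)"
  obtain p where q: "q = p + 3" using assms(8) by (metis add.commute le_Suc_ex)
  have sq: "q * q < 2 * c" unfolding c_def q by (simp add: algebra_simps)
  have "0 < Q" unfolding Q_def q by simp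
  have pw: "q ^ card (insert j (insert l K)) = q * q * Q"
      "q ^ Suc (card (insert j (insert l K))) = q * q * q * Q"
    using assms(1,3,4,7) unfolding Q_def by simp_all
  have "2 * S \<le> q ^ Suc (card (insert j (insert l K)))
      \<or> S \<le> c * Q * (q - 2) + q ^ card (insert j (insert l K))"
    unfolding S_def
  proof (rule card_level_set_insert_le[where a=a])
    show "card (level_set q (insert j (insert l K)) a v) \<le> c * Q" for v
      unfolding c_def Q_def by (rule card_level_set_two_active[where a=a, OF assms(1,3,4,7,10,11)])
    show "q ^ card (insert j (insert l K)) \<le> 2 * (c * Q)"
      using sq by (subst pw(1)) simp
  qed (use assms in auto)
  then have "S < c * (q * Q)"
  proof
    assume "2 * S \<le> q ^ Suc (card (insert j (insert l K)))"
    then have "2 * S \<le> q * q * (q * Q)" unfolding pw by (simp add: mult.assoc)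
    also have "\<dots> < 2 * c * (q * Q)"
      using sq \<open>0 < Q\<close> q by (intro mult_strict_right_mono) auto
    finally show ?thesis by simp
  next
    assume "S \<le> c * Q * (q - 2) + q ^ card (insert j (insert l K))"
    then have "S \<le> c * Q * (q - 2) + q * q * Q" unfolding pw .
    also have "\<dots> < c * Q * (q - 2) + 2 * c * Q"
      using sq \<open>0 < Q\<close> by simp
    also have "\<dots> = c * (q * Q)"
      unfolding q by (simp add: algebra_simps)
    finally show ?thesis .
  qed
  then show ?thesis
    unfolding S_def c_def Q_def by (simp add: mult.assoc)
qed

lemma card_nonconstant_coords_less_three:
  assumes "3 \<le> q" "I \<subseteq> {..<n}" "\<And>l. l \<in> I \<Longrightarrow> nonconstant q (a l)"
    and many: "((q - 1) * (q - 1) + 1) * q ^ (n - 2) \<le> card (level_set q {..<n} a w)"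
  shows "card I < 3"
proof (rule ccontr)
  assume "\<not> card I < 3"
  then obtain J where "J \<subseteq> I" "card J = 3" by (meson obtain_subset_with_card_n not_less)
  then obtain i j l where J: "J = {i, j, l}" "i \<noteq> j" "j \<noteq> l" "i \<noteq> l" by (auto simp: card_3_iff)
  define K where "K = {..<n} - {i, j, l}"
  have ijl: "i < n" "j < n" "l < n" using J \<open>J \<subseteq> I\<close> assms(2) by auto
  then have n: "{..<n} = insert i (insert j (insert l K))" unfolding K_def by auto
  have "card K = n - 3" unfolding K_def using ijl J by (simp add: card_Diff_subset)
  then have "n - 2 = Suc (card K)" using ijl J by linarith
  moreover have "card (level_set q (insert i (insert j (insert l K))) a w)
      < ((q - 1) * (q - 1) + 1) * q ^ Suc (card K)"
    by (rule card_level_set_three_active) (use J \<open>J \<subseteq> I\<close> assms(1,3) in \<open>auto simp: K_def\<close>)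
  ultimately show False using many unfolding n by simp
qed

lemma additive_eq_axis_sum:
  assumes "additive n q f" "0 < q" "x \<in> hamming n q"
  shows "f x = f (\<lambda>_. 0) + (\<Sum>l<n. f ((\<lambda>_. 0)(l := x l)) - f (\<lambda>_. 0))"
proof -
  define pre where "pre L = (\<lambda>j. if j < L then x j else 0)" for L
  have "f (pre L) = f (\<lambda>_. 0) + (\<Sum>l<L. f ((\<lambda>_. 0)(l := x l)) - f (\<lambda>_. 0))" for L
  proof (induction L)
    case 0
    then show ?case by (simp add: pre_def)
  next
    case (Suc L)
    show ?case
    proof (cases "L < n")
      case True
      have "pre L \<in> hamming (n - 1) q" "(\<lambda>_. 0) \<in> hamming (n - 1) q"
        using assms(2,3) True unfolding pre_def hamming_def by auto
      moreover have "x L < q" using assms(3) True unfolding hamming_def by simp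
      then obtain d where "\<forall>t\<in>hamming (n - 1) q. g_fun f L (x L) 0 t = d"
        using assms(1,2) True unfolding additive_def by blast
      ultimately have "g_fun f L (x L) 0 (pre L) = g_fun f L (x L) 0 (\<lambda>_. 0)" by simp
      moreover have "ins_coord L (x L) (pre L) = pre (Suc L)" "ins_coord L 0 (pre L) = pre L"
        "ins_coord L k (\<lambda>_. 0) = (\<lambda>_. 0)(L := k)" for k
        unfolding ins_coord_def pre_def by (auto simp: fun_eq_iff less_Suc_eq)
      ultimately have "f (pre (Suc L)) - f (pre L) = f ((\<lambda>_. 0)(L := x L)) - f (\<lambda>_. 0)"
        unfolding g_fun_def by (simp add: fun_upd_idem)
      then show ?thesis using Suc.IH by (simp only: sum.lessThan_Suc)
    next
      case False
      then have "x L = 0" using assms(3) unfolding hamming_def by simp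
      then have "pre (Suc L) = pre L" "(\<lambda>_. 0)(L := x L) = (\<lambda>_. 0)"
        unfolding pre_def by (auto simp: fun_eq_iff less_Suc_eq)
      then show ?thesis using Suc.IH by (simp only: sum.lessThan_Suc)
    qed
  qed
  moreover have "pre n = x" using assms(3) unfolding pre_def hamming_def by (auto simp: fun_eq_iff)
  ultimately show ?thesis by metis
qed

lemma sum_eq_sum_nonconstant:
  assumes "\<And>l. a l 0 = 0" "x \<in> hamming n q"
  shows "(\<Sum>l<n. a l (x l)) = (\<Sum>l\<in>{l \<in> {..<n}. nonconstant q (a l)}. a l (x l))"
proof (rule sum.mono_neutral_right)
  show "\<forall>l\<in>{..<n} - {l \<in> {..<n}. nonconstant q (a l)}. a l (x l) = 0"
    using assms unfolding nonconstant_def hamming_def by auto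
qed auto

lemma card_zeros_ge_of_card_supp_le:
  assumes "0 < q" "2 \<le> n" "card (supp n q f) \<le> 2 * (q - 1) * q ^ (n - 2)"
  shows "((q - 1) * (q - 1) + 1) * q ^ (n - 2) \<le> card {x \<in> hamming n q. f x = 0}"
proof -
  obtain p where q: "q = Suc p" using assms(1) gr0_implies_Suc by blast
  obtain m where n: "n = m + 2" using assms(2) by (metis add.commute le_Suc_ex)
  define Q where "Q = q ^ m"
  have "card {x \<in> hamming n q. f x = 0} + card (supp n q f) = card (hamming n q)"
    unfolding supp_def
    by (subst card_Un_disjoint[symmetric]) (auto simp: hamming_eq_words finite_words intro: arg_cong[where f=card])
  also have "\<dots> = (p * p + 1) * Q + 2 * p * Q"
    unfolding hamming_eq_words card_words[OF finite_lessThan] Q_def n q by (simp add: algebra_simps)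
  finally show ?thesis
    using assms(3) unfolding n q Q_def by simp
qed

lemma one_coordinate_shape:
  fixes f :: "(nat \<Rightarrow> nat) \<Rightarrow> real"
  assumes "i < n" "2 \<le> n" "nonconstant q \<phi>"
    and f: "\<And>x. x \<in> hamming n q \<Longrightarrow> f x = c + \<phi> (x i)"
    and zeros: "((q - 1) * (q - 1) + 1) * q ^ (n - 2) \<le> card {x \<in> hamming n q. f x = 0}"
  shows "\<exists>k<q. \<exists>e. e \<noteq> 0 \<and> (\<forall>x\<in>hamming n q. f x = (if x \<in> T q k i n then e else 0))"
proof -
  define Q where "Q = q ^ (n - 2)"
  define N where "N = card {k \<in> {..<q}. c + \<phi> k = 0}"
  have "n - 1 = Suc (n - 2)" using assms(2) by simp
  then have qQ: "q ^ (n - 1) = q * Q" unfolding Q_def by simp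
  have "card {x \<in> hamming n q. f x = 0} = card {x \<in> words q {..<n}. c + \<phi> (x i) = 0}"
    using f by (intro arg_cong[where f=card]) (auto simp: hamming_eq_words)
  also have "\<dots> = q ^ (n - 1) * N"
    unfolding N_def using assms(1) by (subst card_words_filter_coord) auto
  also have "\<dots> = (q * N) * Q" unfolding qQ by simp
  finally have "((q - 1) * (q - 1) + 1) * Q \<le> (q * N) * Q"
    using zeros unfolding Q_def by simp
  moreover have "0 < Q" using nonconstant_two_le[OF assms(3)] unfolding Q_def by simp
  ultimately have many: "(q - 1) * (q - 1) + 1 \<le> q * N" by (rule mult_right_le_imp_le)
  obtain k1 where "k1 < q" "\<phi> k1 \<noteq> - c" using assms(3) by (rule nonconstant_ex_ne)
  then have "c + \<phi> k1 \<noteq> 0" by linarith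
  from single_exception_of_card_fiber[of q "\<lambda>k. c + \<phi> k" 0, OF many[unfolded N_def] \<open>k1 < q\<close> this]
  obtain k0 where "k0 < q" and k0: "\<And>k. k < q \<Longrightarrow> c + \<phi> k \<noteq> 0 \<longleftrightarrow> k = k0"
    by blast
  have "f x = (if x \<in> T q k0 i n then c + \<phi> k0 else 0)" if x: "x \<in> hamming n q" for x
  proof -
    have "x i < q" using x assms(1) unfolding hamming_def by simp
    then show ?thesis using f[OF x] k0[of "x i"] x unfolding T_def by auto
  qed
  moreover have "c + \<phi> k0 \<noteq> 0" using k0 \<open>k0 < q\<close> by blast
  ultimately show ?thesis using \<open>k0 < q\<close> by blast
qed

lemma zero_table_single_exceptions:
  fixes c e h :: real
  assumes "3 \<le> q" "k0 < q" "m0 < q" "e \<noteq> 0" "h \<noteq> 0"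
    and many: "(q - 1) * (q - 1) + 1
      \<le> (\<Sum>m<q. card {k \<in> {..<q}. c + (if k = k0 then e else 0) + (if m = m0 then h else 0) = 0})"
  shows "c = 0 \<and> h = - e"
proof -
  define z :: "real \<Rightarrow> nat" where "z t = of_bool (t = 0)" for t
  have "(\<Sum>m<q. card {k \<in> {..<q}. c + (if k = k0 then e else 0) + (if m = m0 then h else 0) = 0})
      = (\<Sum>m<q. \<Sum>k<q. z (c + (if k = k0 then e else 0) + (if m = m0 then h else 0)))"
    unfolding z_def by (simp only: card_filter_eq_sum_of_bool finite_lessThan)
  also have "\<dots> = (\<Sum>m<q. z (c + e + (if m = m0 then h else 0)) + (q - 1) * z (c + (if m = m0 then h else 0)))"
    using sum_if_single[OF assms(2), of "\<lambda>t. z (c + t + _)"] by simp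
  also have "\<dots> = z (c + e + h) + (q - 1) * z (c + h) + (q - 1) * (z (c + e) + (q - 1) * z c)"
    using sum_if_single[OF assms(3), of "\<lambda>t. z (c + e + t) + (q - 1) * z (c + t)"] by (simp add: algebra_simps)
  finally have count: "(q - 1) * (q - 1) + 1 \<le> z (c + e + h) + (q - 1) * z (c + h) + (q - 1) * (z (c + e) + (q - 1) * z c)"
    using many by simp
  txt \<open>Off row \<open>k0\<close> and column \<open>m0\<close> the table is constantly \<open>c\<close>; if \<open>c \<noteq> 0\<close>, all zeros lie
    in that row and column, and there are at most \<open>2 (q - 1)\<close> of them.\<close>
  have "c = 0"
  proof (rule ccontr)
    assume "c \<noteq> 0"
    have "z (c + e + h) + (q - 1) * z (c + h) + (q - 1) * (z (c + e) + (q - 1) * z c) \<le> 2 * (q - 1)"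
    proof (cases "c + h = 0 \<and> c + e = 0")
      case True
      then have "c + e + h \<noteq> 0" using \<open>c \<noteq> 0\<close> by linarith
      then show ?thesis using True \<open>c \<noteq> 0\<close> unfolding z_def by simp
    next
      case False
      then have "z (c + h) + z (c + e) \<le> 1" unfolding z_def by auto
      moreover have "z (c + e + h) \<le> 1" unfolding z_def by simp
      moreover have "(q - 1) * z (c + h) + (q - 1) * z (c + e) \<le> (q - 1) * 1"
        using mult_le_mono2[OF \<open>z (c + h) + z (c + e) \<le> 1\<close>] by (simp only: add_mult_distrib2)
      moreover have "z c = 0" using \<open>c \<noteq> 0\<close> unfolding z_def by simp
      ultimately show ?thesis using assms(1) by simp
    qed
    moreover have "2 * (q - 1) < (q - 1) * (q - 1) + 1"
    proof -
      obtain p where "q = p + 3" using assms(1) by (metis add.commute le_Suc_ex)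
      then show ?thesis by (simp add: algebra_simps)
    qed
    ultimately show False using count by linarith
  qed
  with count have "e + h = 0"
    using assms(4,5) unfolding z_def by (cases "e + h = 0") auto
  with \<open>c = 0\<close> show ?thesis by simp
qed

lemma two_coordinate_zero_pattern:
  fixes \<phi> \<psi> :: "nat \<Rightarrow> real"
  assumes "3 \<le> q" "nonconstant q \<phi>" "nonconstant q \<psi>"
    and many: "(q - 1) * (q - 1) + 1 \<le> (\<Sum>m<q. card {k \<in> {..<q}. c + \<phi> k + \<psi> m = 0})"
  shows "\<exists>k0<q. \<exists>m0<q. \<exists>e. e \<noteq> 0 \<and>
    (\<forall>k<q. \<forall>m<q. c + \<phi> k + \<psi> m = (if k = k0 then e else 0) - (if m = m0 then e else 0))"
proof -
  have "(q - 1) * (q - 1) + 1 \<le> (\<Sum>m<q. card {k \<in> {..<q}. \<phi> k = - c - \<psi> m})"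
    using many by (rule ord_le_eq_trans) (intro sum.cong refl arg_cong[where f=card], auto)
  from single_exception_of_sum_card_fibers[OF this assms(2)]
  obtain u k0 where k0: "k0 < q" "\<And>k. k < q \<Longrightarrow> \<phi> k \<noteq> u \<longleftrightarrow> k = k0"
    by blast
  have "(q - 1) * (q - 1) + 1 \<le> (\<Sum>k<q. card {m \<in> {..<q}. \<psi> m = - c - \<phi> k})"
    using many unfolding sum_card_filter_swap[of q "\<lambda>k m. c + \<phi> k + \<psi> m = 0"]
    by (rule ord_le_eq_trans) (intro sum.cong refl arg_cong[where f=card], auto)
  from single_exception_of_sum_card_fibers[OF this assms(3)]
  obtain v m0 where m0: "m0 < q" "\<And>m. m < q \<Longrightarrow> \<psi> m \<noteq> v \<longleftrightarrow> m = m0"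
    by blast
  define e where "e = \<phi> k0 - u"
  define h where "h = \<psi> m0 - v"
  define c' where "c' = c + u + v"
  have "e \<noteq> 0" "h \<noteq> 0" using k0 m0 unfolding e_def h_def by auto
  have rep: "c + \<phi> k + \<psi> m = c' + (if k = k0 then e else 0) + (if m = m0 then h else 0)"
    if "k < q" "m < q" for k m
    using k0(2)[OF that(1)] m0(2)[OF that(2)] unfolding c'_def e_def h_def by auto
  have "(q - 1) * (q - 1) + 1
      \<le> (\<Sum>m<q. card {k \<in> {..<q}. c' + (if k = k0 then e else 0) + (if m = m0 then h else 0) = 0})"
    using many by (rule ord_le_eq_trans) (intro sum.cong refl arg_cong[where f=card] Collect_cong, auto simp: rep)
  then have "c' = 0 \<and> h = - e"
    using zero_table_single_exceptions[OF assms(1) k0(1) m0(1) \<open>e \<noteq> 0\<close> \<open>h \<noteq> 0\<close>] by blast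
  then show ?thesis
    using rep \<open>e \<noteq> 0\<close> k0(1) m0(1) by (intro exI[of _ k0] exI[of _ m0] exI[of _ e]) auto
qed

lemma two_coordinates_shape:
  fixes f :: "(nat \<Rightarrow> nat) \<Rightarrow> real"
  assumes "i < n" "j < n" "i \<noteq> j" "3 \<le> q" "nonconstant q \<phi>" "nonconstant q \<psi>"
    and f: "\<And>x. x \<in> hamming n q \<Longrightarrow> f x = c + \<phi> (x i) + \<psi> (x j)"
    and zeros: "((q - 1) * (q - 1) + 1) * q ^ (n - 2) \<le> card {x \<in> hamming n q. f x = 0}"
  shows "\<exists>k<q. \<exists>m<q. \<exists>e. e \<noteq> 0 \<and> (\<forall>x\<in>hamming n q.
           f x = (if x \<in> T q k i n - T q m j n then e else if x \<in> T q m j n - T q k i n then - e else 0))"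
proof -
  define Q where "Q = q ^ (n - 2)"
  define S where "S = (\<Sum>m<q. card {k \<in> {..<q}. c + \<phi> k + \<psi> m = 0})"
  have "card {x \<in> hamming n q. f x = 0} = card {x \<in> words q {..<n}. c + \<phi> (x i) + \<psi> (x j) = 0}"
    using f by (intro arg_cong[where f=card]) (auto simp: hamming_eq_words)
  also have "\<dots> = Q * S"
    unfolding Q_def S_def using assms(1-3) by (subst card_words_filter_two_coords) auto
  finally have "((q - 1) * (q - 1) + 1) * Q \<le> S * Q"
    using zeros by (simp add: Q_def algebra_simps)
  moreover have "0 < Q" using assms(4) unfolding Q_def by simp
  ultimately have "(q - 1) * (q - 1) + 1 \<le> S" by (rule mult_right_le_imp_le)
  from two_coordinate_zero_pattern[OF assms(4-6) this[unfolded S_def]]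
  obtain k0 m0 e where "k0 < q" "m0 < q" "e \<noteq> 0" and pattern:
    "\<And>k m. k < q \<Longrightarrow> m < q \<Longrightarrow> c + \<phi> k + \<psi> m = (if k = k0 then e else 0) - (if m = m0 then e else 0)"
    by blast
  have "f x = (if x \<in> T q k0 i n - T q m0 j n then e else if x \<in> T q m0 j n - T q k0 i n then - e else 0)"
    if x: "x \<in> hamming n q" for x
  proof -
    have "x i < q" "x j < q" using x assms(1,2) unfolding hamming_def by simp_all
    then show ?thesis using f[OF x] pattern[of "x i" "x j"] x unfolding T_def by auto
  qed
  then show ?thesis using \<open>k0 < q\<close> \<open>m0 < q\<close> \<open>e \<noteq> 0\<close> by blast
qed

theorem theorem2:
  fixes n q :: nat and f :: "(nat \<Rightarrow> nat) \<Rightarrow> real"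
  assumes "q > 2" and "n > 1"
    and "additive n q f"
    and "card (supp n q f) \<le> 2 * (q - 1) * q ^ (n - 2)"
  shows "(\<forall>x\<in>hamming n q. f x = 0)
    \<or> (\<exists>i<n. \<exists>k<q. \<exists>c. c \<noteq> 0 \<and>
          (\<forall>x\<in>hamming n q. f x = (if x \<in> T q k i n then c else 0)))
    \<or> (\<exists>i<n. \<exists>j<n. i \<noteq> j \<and> (\<exists>k<q. \<exists>m<q. \<exists>c. c \<noteq> 0 \<and>
          (\<forall>x\<in>hamming n q.
             f x = (if x \<in> T q k i n - T q m j n then c
                    else if x \<in> T q m j n - T q k i n then -c else 0))))"
proof -
  define c where "c = f (\<lambda>_. 0)"
  define a where "a l k = f ((\<lambda>_. 0)(l := k)) - c" for l k
  define I where "I = {l \<in> {..<n}. nonconstant q (a l)}"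
  have f_sum: "f x = c + (\<Sum>l<n. a l (x l))" if "x \<in> hamming n q" for x
    using additive_eq_axis_sum[OF assms(3) _ that] assms(1) unfolding a_def c_def by simp
  have "a l 0 = 0" for l unfolding a_def c_def by (simp add: fun_upd_idem)
  then have f_I: "f x = c + (\<Sum>l\<in>I. a l (x l))" if "x \<in> hamming n q" for x
    using f_sum[OF that] sum_eq_sum_nonconstant[OF _ that, of a] unfolding I_def by simp
  have zeros: "((q - 1) * (q - 1) + 1) * q ^ (n - 2) \<le> card {x \<in> hamming n q. f x = 0}"
    using assms by (intro card_zeros_ge_of_card_supp_le) auto
  moreover have "{x \<in> hamming n q. f x = 0} = level_set q {..<n} a (- c)"
    using f_sum by (auto simp: level_set_def hamming_eq_words)
  ultimately have "card I < 3"
    using assms(1) by (intro card_nonconstant_coords_less_three[of q I n a "- c"]) (auto simp: I_def)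
  moreover have "finite I" unfolding I_def by simp
  moreover have "card I = 0 \<or> card I = 1 \<or> card I = 2" using \<open>card I < 3\<close> by linarith
  ultimately consider "I = {}" | i where "I = {i}" | i j where "i \<noteq> j" "I = {i, j}"
    by (metis card_0_eq card_1_singletonE card_2_iff)
  then show ?thesis
  proof cases
    case 1
    have "card {x \<in> hamming n q. f x = 0} \<noteq> 0" using zeros assms(1) by (intro notI) simp
    then have "c = 0" using f_I 1 by (auto simp: card_eq_0_iff)
    then show ?thesis using f_I 1 by simp
  next
    case (2 i)
    have "\<exists>k<q. \<exists>e. e \<noteq> 0 \<and> (\<forall>x\<in>hamming n q. f x = (if x \<in> T q k i n then e else 0))"
      by (rule one_coordinate_shape[of i n q "a i" f c]) (use 2 assms f_I zeros in \<open>auto simp: I_def\<close>)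
    then show ?thesis using 2 unfolding I_def by blast
  next
    case (3 i j)
    have "\<exists>k<q. \<exists>m<q. \<exists>e. e \<noteq> 0 \<and> (\<forall>x\<in>hamming n q. f x = (if x \<in> T q k i n - T q m j n then e
            else if x \<in> T q m j n - T q k i n then - e else 0))"
      by (rule two_coordinates_shape[of i n j q "a i" "a j" f c]) (use 3 assms f_I zeros in \<open>auto simp: I_def\<close>)
    then show ?thesis using 3 unfolding I_def by blast
  qed
qed

end
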